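(* For all integers $n \geq k \geq 1$ and $m \geq 1$, let $\Sigma = \{0,1,\dots,m\}$ and let $\Sigma^{n \times k}$ be the $(m+1)^n \times (m+1)^k$ binary matrix with rows indexed by $x \in \Sigma^n$, columns indexed by $y \in \Sigma^k$, and entry $(x,y)$ equal to $1$ if $y$ is a subsequence of $x$ and $0$ otherwise. Then $\operatorname{rank}(\Sigma^{n \times k}) = (m+1)^k$.
   Context: A string $y$ of length $k$ is a subsequence of a string $x$ of length $n$ if there exist indices $i_1 < \dots < i_k$ with $x_{i_j} = y_j$ for all $j$. Rank is over the reals. *)

theory Defs
  imports "HOL-Library.Sublist" "Jordan_Normal_Form.DL_Rank"
begin

definition words :: "nat \<Rightarrow> nat \<Rightarrow> nat list list" where
  "words m l = List.n_lists l [0..<Suc m]"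

definition subseq_matrix :: "nat \<Rightarrow> nat \<Rightarrow> nat \<Rightarrow> real mat" where
  "subseq_matrix m n k =
     mat (length (words m n)) (length (words m k))
       (\<lambda>(i, j). if subseq (words m k ! j) (words m n ! i) then 1 else 0)"

end

theory Submission
  imports Defs
begin

text \<open>
  For a word \<open>y = a # t\<close> of length \<open>k\<close>, let \<open>x\<^sub>y = a\<^bsup>n-k\<^esup> @ y\<close>, the length-\<open>n\<close> word obtained
  by lengthening the leading run of \<open>y\<close>. A word \<open>y'\<close> of length \<open>k\<close> that is a subsequence of
  \<open>x\<^sub>y\<close> must start with \<open>a\<close>, and what remains of it after its leading run is a subsequence of
  what remains of \<open>y\<close>; so either \<open>y' = y\<close> or that remainder is strictly shorter. Hence the
  rows \<open>x\<^sub>y\<close> form a square submatrix that is unitriangular once the columns are ordered by the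
  length of this remainder, the \<open>(m+1)\<^sup>k\<close> columns are linearly independent, and the rank is
  the number of columns.
\<close>

definition drop_head_run :: "'a list \<Rightarrow> 'a list" where
  "drop_head_run y = dropWhile (\<lambda>b. b = hd y) y"

lemma subseq_dropWhile:
  assumes "subseq xs ys"
  shows "subseq (dropWhile P xs) (dropWhile P ys)"
  using assms
proof (induction rule: list_emb.induct)
  case (list_emb_Nil ys)
  then show ?case by simp
next
  case (list_emb_Cons xs ys y)
  have "subseq (dropWhile P ys) ys"
    by (metis list_emb_append2 takeWhile_dropWhile_id subseq_order.order_refl)
  with list_emb_Cons.IH have "subseq (dropWhile P xs) ys"
    by (meson subseq_order.order_trans)
  with list_emb_Cons.IH show ?case by (cases "P y") auto
next
  case (list_emb_Cons2 x y xs ys)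
  then show ?case by auto
qed

lemma replicate_append_drop_head_run:
  "replicate (length y - length (drop_head_run y)) (hd y) @ drop_head_run y = y"
proof -
  let ?P = "\<lambda>b. b = hd y"
  have "length y = length (takeWhile ?P y) + length (dropWhile ?P y)"
    by (metis length_append takeWhile_dropWhile_id)
  moreover have "replicate (length (takeWhile ?P y)) (hd y) = takeWhile ?P y"
    by (meson replicate_length_same set_takeWhileD)
  ultimately show ?thesis
    unfolding drop_head_run_def by (metis add_diff_cancel_right' takeWhile_dropWhile_id)
qed

lemma length_drop_head_run_less:
  "y \<noteq> [] \<Longrightarrow> length (drop_head_run y) < length y"
  by (cases y) (simp_all add: drop_head_run_def le_imp_less_Suc length_dropWhile_le)

lemma subseq_replicate_hd_append:
  assumes y: "y \<noteq> []" and len: "length y' = length y"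
    and sub: "subseq y' (replicate N (hd y) @ y)"
  shows "y' = y \<or> length (drop_head_run y') < length (drop_head_run y)"
proof -
  define a where "a = hd y"
  define z where "z = drop_head_run y"
  have "replicate N a @ y = replicate (N + (length y - length z)) a @ z"
    using replicate_append_drop_head_run[of y]
    by (metis a_def z_def append_assoc replicate_add)
  with sub obtain p q where y': "y' = p @ q"
    and p: "subseq p (replicate (N + (length y - length z)) a)" and q: "subseq q z"
    by (metis a_def subseq_appendE)
  have p_a: "x = a" if "x \<in> set p" for x
    using list_emb_set[OF p that] by auto
  have "length q < length y"
    using list_emb_length[OF q] length_drop_head_run_less[OF y] z_def by simp
  then have "p \<noteq> []" using len y' by auto
  then have hd_y': "hd y' = a" using p_a y' by (cases p) auto
  have "drop_head_run y' = dropWhile (\<lambda>b. b = a) q"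
    using p_a y' hd_y' by (simp add: drop_head_run_def dropWhile_append2)
  moreover have "dropWhile (\<lambda>b. b = a) z = z"
    by (simp add: z_def a_def drop_head_run_def dropWhile_idem)
  ultimately have "subseq (drop_head_run y') z"
    using subseq_dropWhile[OF q] by metis
  then consider "drop_head_run y' = z" | "length (drop_head_run y') < length z"
    using list_emb_length subseq_same_length le_neq_implies_less by blast
  then show ?thesis
  proof cases
    case 1
    then have "y' = y"
      using replicate_append_drop_head_run[of y] replicate_append_drop_head_run[of y']
      by (metis a_def z_def hd_y' len)
    then show ?thesis ..
  qed (simp add: z_def)
qed

context
  fixes A :: "'a::field mat" and nr nc :: nat and pivot :: "nat \<Rightarrow> nat" and \<mu> :: "nat \<Rightarrow> nat"
  assumes A: "A \<in> carrier_mat nr nc"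
    and pivot: "\<And>j. j < nc \<Longrightarrow> pivot j < nr \<and> A $$ (pivot j, j) \<noteq> 0"
    and triangular: "\<And>j j'. j < nc \<Longrightarrow> j' < nc \<Longrightarrow> j' \<noteq> j \<Longrightarrow> A $$ (pivot j, j') \<noteq> 0 \<Longrightarrow> \<mu> j' < \<mu> j"
begin

lemma triangular_mult_vec_eq_zero:
  assumes v: "v \<in> carrier_vec nc" and Av: "A *\<^sub>v v = 0\<^sub>v nr"
  shows "v = 0\<^sub>v nc"
proof -
  have "v $ j = 0" if "j < nc" for j
    using that
  proof (induction "\<mu> j" arbitrary: j rule: less_induct)
    case less
    have "0 = (A *\<^sub>v v) $ pivot j" using Av pivot[OF less.prems] by simp
    also have "\<dots> = (\<Sum>j'\<in>{0..<nc}. A $$ (pivot j, j') * v $ j')"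
      using A v pivot[OF less.prems] by (simp add: scalar_prod_def)
    also have "\<dots> = (\<Sum>j'\<in>{0..<nc}. if j' = j then A $$ (pivot j, j) * v $ j else 0)"
      using less triangular by (intro sum.cong) auto
    also have "\<dots> = A $$ (pivot j, j) * v $ j" using less.prems by simp
    finally show ?case using pivot[OF less.prems] by simp
  qed
  with v show ?thesis by (intro eq_vecI) auto
qed

lemma triangular_distinct_cols: "distinct (cols A)"
proof -
  have "j = j'" if j: "j < nc" and j': "j' < nc" and eq: "col A j = col A j'" for j j'
  proof (rule ccontr)
    assume "j \<noteq> j'"
    moreover have "A $$ (pivot j, j') = A $$ (pivot j, j)" "A $$ (pivot j', j) = A $$ (pivot j', j')"
      using A j j' pivot eq by (metis carrier_matD(1) col_def index_vec)+
    ultimately have "\<mu> j' < \<mu> j" "\<mu> j < \<mu> j'"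
      using triangular pivot j j' by metis+
    then show False by simp
  qed
  then have "inj_on (col A) {0..<nc}" by (auto intro: inj_onI)
  then show ?thesis using A by (simp add: cols_def distinct_map)
qed

lemma triangular_rank: "vec_space.rank nr A = nc"
proof -
  interpret vec_space "TYPE('a)" nr .
  have "lin_indpt (set (cols A))"
  proof
    assume "lin_dep (set (cols A))"
    then obtain v where "v \<in> carrier_vec nc" "v \<noteq> 0\<^sub>v nc" "A *\<^sub>v v = 0\<^sub>v nr"
      using lin_depE[OF A _ triangular_distinct_cols] by blast
    then show False using triangular_mult_vec_eq_zero by blast
  qed
  then show ?thesis by (rule lin_indpt_full_rank[OF A triangular_distinct_cols])
qed

end

lemma length_words: "length (words m l) = (m + 1) ^ l"
  by (simp add: words_def length_n_lists)

lemma set_words: "set (words m l) = {ys. length ys = l \<and> set ys \<subseteq> {0..<Suc m}}"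
  by (simp only: words_def set_n_lists set_upt)

lemma distinct_words: "distinct (words m l)"
  by (simp add: words_def distinct_n_lists)

lemma replicate_hd_append_in_words:
  assumes "y \<in> set (words m k)" and "y \<noteq> []"
  shows "replicate N (hd y) @ y \<in> set (words m (N + k))"
  using assms hd_in_set[OF assms(2)] by (auto simp: set_words)

lemma subseq_matrix_carrier: "subseq_matrix m n k \<in> carrier_mat ((m + 1) ^ n) ((m + 1) ^ k)"
  by (simp add: subseq_matrix_def length_words)

lemma index_subseq_matrix:
  assumes "i < (m + 1) ^ n" and "j < (m + 1) ^ k"
  shows "subseq_matrix m n k $$ (i, j) = (if subseq (words m k ! j) (words m n ! i) then 1 else 0)"
  using assms by (simp add: subseq_matrix_def length_words)

theorem mainTheorem3:
  fixes n k m :: nat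
  assumes "1 \<le> k" and "k \<le> n" and "1 \<le> m"
  shows "vec_space.rank ((m + 1) ^ n) (subseq_matrix m n k) = (m + 1) ^ k"
proof -
  define x where "x j = replicate (n - k) (hd (words m k ! j)) @ words m k ! j" for j
  have word: "length (words m k ! j) = k" "words m k ! j \<noteq> []" if "j < (m + 1) ^ k" for j
    using that assms(1) nth_mem[of j "words m k"] by (auto simp: length_words set_words)
  have "x j \<in> set (words m n)" if "j < (m + 1) ^ k" for j
    using replicate_hd_append_in_words[OF nth_mem word(2)[OF that], of "n - k"] that assms(2)
    by (simp add: x_def length_words)
  then obtain pivot where row: "pivot j < (m + 1) ^ n" "words m n ! pivot j = x j" if "j < (m + 1) ^ k" for j
    unfolding in_set_conv_nth length_words by metis
  show ?thesis
  proof (rule triangular_rank[OF subseq_matrix_carrier,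
        where \<mu> = "\<lambda>j. length (drop_head_run (words m k ! j))"])
    fix j assume j: "j < (m + 1) ^ k"
    have "subseq (words m k ! j) (x j)"
      unfolding x_def by (rule list_emb_append2[OF subseq_order.order_refl])
    then show "pivot j < (m + 1) ^ n \<and> subseq_matrix m n k $$ (pivot j, j) \<noteq> 0"
      using row[OF j] index_subseq_matrix[OF row(1)[OF j] j] by simp
  next
    fix j j' assume j: "j < (m + 1) ^ k" and j': "j' < (m + 1) ^ k" and "j' \<noteq> j"
      and "subseq_matrix m n k $$ (pivot j, j') \<noteq> 0"
    then have "subseq (words m k ! j') (x j)"
      using row[OF j] index_subseq_matrix[OF row(1)[OF j] j'] by (simp split: if_splits)
    moreover have "words m k ! j' \<noteq> words m k ! j"
      using \<open>j' \<noteq> j\<close> j j' distinct_words by (simp add: nth_eq_iff_index_eq length_words)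
    ultimately show "length (drop_head_run (words m k ! j')) < length (drop_head_run (words m k ! j))"
      using subseq_replicate_hd_append[OF word(2)[OF j]] word(1)[OF j] word(1)[OF j']
      by (auto simp: x_def)
  qed
qed

end
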